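(* For any $\mathcal{H}\subseteq\{0,1\}^{\mathcal{X}}$, there exists a deterministic online learner which, under apple tasting feedback, makes at most $\operatorname{AL}_1(\mathcal{H})$ mistakes on any sequence $(x_1,y_1),\dots,(x_T,y_T)$ realizable by $\mathcal{H}$ (i.e. $y_t=h(x_t)$ for all $t$ for some $h\in\mathcal{H}$).
   Context: Apple tasting feedback: in each round the learner receives $x_t\in\mathcal{X}$, predicts $\hat y_t\in\{0,1\}$, and observes the true label $y_t$ only if $\hat y_t=1$; a mistake is a round with $\hat y_t\ne y_t$. AL tree of width $w\in\mathbb{N}$ and depth $d$: a binary string $u$ is an internal node if $|u|<d$ and $u$ has fewer than $w$ ones; the tree assigns $x_u\in\mathcal{X}$ to each internal node. A path is a binary string $\sigma$ whose proper prefixes are all internal nodes but which is not itself one. The tree is shattered by $\mathcal{H}$ if for every path $\sigma$ some $h\in\mathcal{H}$ satisfies $h(x_{(\sigma_1,\dots,\sigma_{i-1})})=\sigma_i$ for all $i\le|\sigma|$. $\operatorname{AL}_w(\mathcal{H})$ is the largest $d$ such that such a tree of width $w$ and depth $d$ is shattered ($\infty$ if unbounded, $0$ if none). (For $w=1$: internal nodes are the strings $0^k$, $k<d$, and paths are $0^d$ and $0^k1$ for $k<d$.) *)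

theory Defs
  imports Main "HOL-Library.Extended_Nat"
begin

text \<open>Nodes are binary strings (bool lists, True = 1). A tree of width w
and depth d assigns an instance to each internal node; we model it as a total
function on bool lists, only its values on internal nodes matter.\<close>

definition al_internal :: "nat \<Rightarrow> nat \<Rightarrow> bool list \<Rightarrow> bool" where
  "al_internal w d u \<longleftrightarrow> length u < d \<and> length (filter id u) < w"

definition al_path :: "nat \<Rightarrow> nat \<Rightarrow> bool list \<Rightarrow> bool" where
  "al_path w d \<sigma> \<longleftrightarrow> (\<forall>i < length \<sigma>. al_internal w d (take i \<sigma>)) \<and> \<not> al_internal w d \<sigma>"

definition al_shattered :: "('x \<Rightarrow> bool) set \<Rightarrow> nat \<Rightarrow> nat \<Rightarrow> (bool list \<Rightarrow> 'x) \<Rightarrow> bool" where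
  "al_shattered H w d tr \<longleftrightarrow>
     (\<forall>\<sigma>. al_path w d \<sigma> \<longrightarrow> (\<exists>h\<in>H. \<forall>i < length \<sigma>. h (tr (take i \<sigma>)) = \<sigma> ! i))"

text \<open>AL_w(H): supremum of shattered depths (Sup of the empty set is 0, unbounded gives \<infinity>).\<close>
definition AL :: "nat \<Rightarrow> ('x \<Rightarrow> bool) set \<Rightarrow> enat" where
  "AL w H = Sup {enat d | d. \<exists>tr. al_shattered H w d tr}"

text \<open>The history records, for each past round, the instance and
the observed label: Some y if the learner predicted 1 (True), None otherwise.\<close>
type_synonym 'x at_learner = "('x \<times> bool option) list \<Rightarrow> 'x \<Rightarrow> bool"

fun at_mistakes :: "'x at_learner \<Rightarrow> ('x \<times> bool option) list \<Rightarrow> ('x \<times> bool) list \<Rightarrow> nat" where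
  "at_mistakes L hist [] = 0"
| "at_mistakes L hist ((x, y) # rest) =
     (let p = L hist x in
       (if p \<noteq> y then 1 else 0) + at_mistakes L (hist @ [(x, if p then Some y else None)]) rest)"

definition realizable :: "('x \<Rightarrow> bool) set \<Rightarrow> ('x \<times> bool) list \<Rightarrow> bool" where
  "realizable H S \<longleftrightarrow> (\<exists>h\<in>H. \<forall>(x, y) \<in> set S. y = h x)"

end

theory Submission
  imports Defs
begin

text \<open>The learner predicts 1 exactly when some hypothesis consistent with the labels seen so
far predicts 1. If it predicts 0, the target predicts 0 too, so every mistake is a false
positive on some x: before it, a consistent hypothesis labelled x with 1; after it, all
remaining consistent hypotheses label x with 0. Hence the mistake instances
x_1, ..., x_m, placed along the all-zero spine of a width-1 tree, form a shattered tree: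
the path 0^k 1 is realised by the hypothesis that caused the (k+1)-st mistake, and 0^m by the
target.\<close>

lemma al_internal_Nil: "al_internal w d [] \<longleftrightarrow> 0 < d \<and> 0 < w"
  by (auto simp: al_internal_def)

lemma al_internal_Cons_False: "al_internal w (Suc d) (False # u) \<longleftrightarrow> al_internal w d u"
  by (simp add: al_internal_def)

lemma al_internal_Cons_True: "al_internal (Suc w) (Suc d) (True # u) \<longleftrightarrow> al_internal w d u"
  by (simp add: al_internal_def)

lemma al_path_zero_width: "al_path 0 d \<sigma> \<longleftrightarrow> \<sigma> = []"
  by (cases \<sigma>) (auto simp: al_path_def al_internal_def)

lemma al_path_zero_depth: "al_path w 0 \<sigma> \<longleftrightarrow> \<sigma> = []"
  by (cases \<sigma>) (auto simp: al_path_def al_internal_def)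

lemma al_path_Nil: "al_path w d [] \<longleftrightarrow> d = 0 \<or> w = 0"
  by (auto simp: al_path_def al_internal_Nil)

lemma al_path_Cons_False:
  assumes "0 < w"
  shows "al_path w (Suc d) (False # \<sigma>) \<longleftrightarrow> al_path w d \<sigma>"
  using assms by (simp add: al_path_def All_less_Suc2 al_internal_Nil al_internal_Cons_False)

lemma al_path_Cons_True: "al_path (Suc w) (Suc d) (True # \<sigma>) \<longleftrightarrow> al_path w d \<sigma>"
  by (simp add: al_path_def All_less_Suc2 al_internal_Nil al_internal_Cons_True)

text \<open>A width-1 tree only depends on the labels x_0, ..., x_(d-1) on its spine 0^k; the tree is
shattered iff some h is 1 at x_0, and the hypotheses that are 0 at x_0 shatter the rest.\<close>

fun shatters_chain :: "('x \<Rightarrow> bool) set \<Rightarrow> 'x list \<Rightarrow> bool" where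
  "shatters_chain H [] \<longleftrightarrow> H \<noteq> {}"
| "shatters_chain H (x # xs) \<longleftrightarrow> (\<exists>h\<in>H. h x) \<and> shatters_chain {h\<in>H. \<not> h x} xs"

lemma shatters_chain_mono:
  assumes "shatters_chain H xs" "H \<subseteq> H'"
  shows "shatters_chain H' xs"
  using assms
proof (induction xs arbitrary: H H')
  case Nil
  then show ?case by auto
next
  case (Cons x xs)
  have "{h\<in>H. \<not> h x} \<subseteq> {h\<in>H'. \<not> h x}" using Cons.prems(2) by auto
  then show ?case using Cons by auto
qed

lemma shatters_chain_al_shattered:
  assumes "shatters_chain H xs"
  shows "al_shattered H 1 (length xs) (\<lambda>u. xs ! length u)"
  using assms
proof (induction xs arbitrary: H)
  case Nil
  then show ?case by (auto simp: al_shattered_def al_path_zero_depth)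
next
  case (Cons x xs)
  obtain h\<^sub>1 where h\<^sub>1: "h\<^sub>1 \<in> H" "h\<^sub>1 x" using Cons.prems by auto
  have rest: "al_shattered {h\<in>H. \<not> h x} 1 (length xs) (\<lambda>u. xs ! length u)"
    using Cons by simp
  show ?case
    unfolding al_shattered_def
  proof (intro allI impI)
    fix \<sigma> assume path: "al_path 1 (length (x # xs)) \<sigma>"
    show "\<exists>h\<in>H. \<forall>i < length \<sigma>. h ((x # xs) ! length (take i \<sigma>)) = \<sigma> ! i"
    proof (cases \<sigma>)
      case Nil
      then show ?thesis using path by (simp add: al_path_Nil)
    next
      case (Cons b \<sigma>')
      show ?thesis
      proof (cases b)
        case True
        then have "\<sigma> = [True]"
          using path Cons by (simp add: al_path_Cons_True[where w = 0, simplified] al_path_zero_width)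
        then show ?thesis using h\<^sub>1 by auto
      next
        case False
        then have "al_path 1 (length xs) \<sigma>'" using path Cons by (simp add: al_path_Cons_False)
        then obtain h where "h \<in> H" "\<not> h x"
          and "\<forall>i < length \<sigma>'. h (xs ! length (take i \<sigma>')) = \<sigma>' ! i"
          using rest unfolding al_shattered_def by blast
        then have "\<forall>i < length \<sigma>. h ((x # xs) ! length (take i \<sigma>)) = \<sigma> ! i"
          using Cons False by (simp add: All_less_Suc2)
        then show ?thesis using \<open>h \<in> H\<close> by blast
      qed
    qed
  qed
qed

lemma shatters_chain_length_le_AL:
  assumes "shatters_chain H xs"
  shows "enat (length xs) \<le> AL 1 H"
  unfolding AL_def
  using shatters_chain_al_shattered[OF assms] by (blast intro: Sup_upper)

definition version_space :: "('x \<Rightarrow> bool) set \<Rightarrow> ('x \<times> bool option) list \<Rightarrow> ('x \<Rightarrow> bool) set" where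
  "version_space H hist = {h\<in>H. \<forall>(x, oy) \<in> set hist. \<forall>y. oy = Some y \<longrightarrow> h x = y}"

definition optimistic_learner :: "('x \<Rightarrow> bool) set \<Rightarrow> 'x at_learner" where
  "optimistic_learner H hist x \<longleftrightarrow> (\<exists>h\<in>version_space H hist. h x)"

lemma version_space_Nil: "version_space H [] = H"
  by (simp add: version_space_def)

lemma version_space_snoc:
  "version_space H (hist @ [(x, oy)]) = {h\<in>version_space H hist. \<forall>y. oy = Some y \<longrightarrow> h x = y}"
  by (auto simp: version_space_def)

lemma optimistic_learner_mistakes_shatter_chain:
  assumes "h\<^sub>0 \<in> version_space H hist" "\<forall>(x, y) \<in> set S. y = h\<^sub>0 x"
  shows "\<exists>xs. length xs = at_mistakes (optimistic_learner H) hist S \<and>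
    shatters_chain (version_space H hist) xs"
  using assms
proof (induction S arbitrary: hist)
  case Nil
  then show ?case by (intro exI[of _ "[]"]) auto
next
  case (Cons xy S)
  obtain x y where xy: "xy = (x, y)" by fastforce
  have y: "y = h\<^sub>0 x" using Cons.prems(2) xy by auto
  let ?V = "version_space H hist"
  let ?p = "optimistic_learner H hist x"
  let ?hist' = "hist @ [(x, if ?p then Some y else None)]"
  have "h\<^sub>0 \<in> version_space H ?hist'" using Cons.prems(1) y by (simp add: version_space_snoc)
  then obtain xs where xs: "length xs = at_mistakes (optimistic_learner H) ?hist' S"
    and chain: "shatters_chain (version_space H ?hist') xs"
    using Cons.IH Cons.prems(2) by auto
  have mistakes: "at_mistakes (optimistic_learner H) hist (xy # S) =
      (if ?p \<noteq> y then 1 else 0) + at_mistakes (optimistic_learner H) ?hist' S"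
    by (simp add: xy Let_def)
  show ?case
  proof (cases "?p = y")
    case True
    have "version_space H ?hist' \<subseteq> ?V" by (auto simp: version_space_snoc)
    then show ?thesis using xs chain mistakes True by (auto intro: shatters_chain_mono)
  next
    case False
    \<comment> \<open>a prediction of 0 is never wrong, since the target lies in the version space\<close>
    have "?p" "\<not> y"
      using False y Cons.prems(1) unfolding optimistic_learner_def by auto
    then have "version_space H ?hist' = {h\<in>?V. \<not> h x}" by (auto simp: version_space_snoc)
    then have "shatters_chain ?V (x # xs)"
      using chain \<open>?p\<close> unfolding optimistic_learner_def by simp
    then show ?thesis using xs mistakes False by (intro exI[of _ "x # xs"]) simp
  qed
qed

theorem theorem4:
  fixes H :: "('x \<Rightarrow> bool) set"
  shows "\<exists>L :: 'x at_learner. \<forall>S. realizable H S \<longrightarrow> enat (at_mistakes L [] S) \<le> AL 1 H"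
proof (intro exI[of _ "optimistic_learner H"] allI impI)
  fix S assume "realizable H S"
  then obtain h where "h \<in> version_space H []" "\<forall>(x, y) \<in> set S. y = h x"
    unfolding realizable_def version_space_Nil by blast
  then obtain xs where "length xs = at_mistakes (optimistic_learner H) [] S"
    and "shatters_chain H xs"
    using optimistic_learner_mistakes_shatter_chain version_space_Nil by metis
  then show "enat (at_mistakes (optimistic_learner H) [] S) \<le> AL 1 H"
    using shatters_chain_length_le_AL by metis
qed

end
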